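(* For every two-dimensional Minkowski space $X$ we have $m(X)=3$.
   Context: A Minkowski space is a finite-dimensional real normed space $(X,\|\cdot\|)$. For a set $S\subseteq X$, its midpoint set is $M(S)=\{\tfrac12(x+y): x,y\in S,\ x\neq y\}$. A set $S\subseteq X$ is an M-set if every vector in $M(S)$ has norm exactly $1$ and every vector in $S$ has norm strictly greater than $1$. $m(X)$ denotes the largest cardinality of an M-set in $X$ if such a largest finite cardinality exists, and $m(X)=\infty$ otherwise. *)

theory Defs
  imports "HOL-Analysis.Analysis" "HOL-Library.Extended_Nat"
begin

definition midpoint_set :: "'a::real_vector set \<Rightarrow> 'a set" where
  "midpoint_set S = {(1/2) *\<^sub>R (x + y) | x y. x \<in> S \<and> y \<in> S \<and> x \<noteq> y}"

definition M_set :: "'a::real_normed_vector set \<Rightarrow> bool" where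
  "M_set S \<longleftrightarrow> (\<forall>z \<in> midpoint_set S. norm z = 1) \<and> (\<forall>x \<in> S. norm x > 1)"

definition m_num :: "'a::real_normed_vector itself \<Rightarrow> enat" where
  "m_num _ = (if (\<exists>n::nat. (\<exists>S::'a set. M_set S \<and> finite S \<and> card S = n) \<and>
                       (\<forall>S::'a set. M_set S \<longrightarrow> finite S \<and> card S \<le> n))
              then enat (GREATEST n. \<exists>S::'a set. M_set S \<and> finite S \<and> card S = n)
              else \<infinity>)"

end

theory Submission
  imports Defs
begin

(*
  The upper bound rests on one convexity observation: in an M-set S any two distinct
  points have norm (x + y) = 2, and since balls are convex this extends to
  norm (p + q) <= 2 for p, q in the convex hulls of two disjoint subsets of S.
  Consequently no point of S lies in the convex hull of other points of S, and in a
  Radon partition of a finite affinely dependent subset of S both parts have at least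
  two points.  Three points of an M-set are therefore affinely independent, and four
  points (which are affinely dependent in the plane) would have a Radon partition into
  two crossing segments [a,b], [c,d].  These segments are not parallel, so the sums
  p + q with p in [a,b], q in [c,d] fill a neighbourhood of a + b in the plane; this
  contains (1 + delta) (a + b), of norm greater than 2, a contradiction.

  For the lower bound, an intermediate value argument along a path from a to -a yields
  unit vectors a, b, c with a + b + c = 0, and {2a, 2b, 2c} is an M-set.
*)

lemma M_set_midpoint_norm:
  assumes "M_set S" "x \<in> S" "y \<in> S" "x \<noteq> y"
  shows "norm (x + y) = 2"
proof -
  have "(1/2) *\<^sub>R (x + y) \<in> midpoint_set S"
    using assms unfolding midpoint_set_def by blast
  then have "norm ((1/2) *\<^sub>R (x + y)) = 1"
    using assms(1) unfolding M_set_def by blast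
  then show ?thesis by simp
qed

text \<open>The key convexity estimate: the bound \<open>norm (x + y) \<le> 2\<close> on pairs of distinct points
  extends to pairs of points from the convex hulls of two disjoint parts of an M-set, because
  \<open>{y. norm (x + y) \<le> 2}\<close> is the ball \<open>cball (- x) 2\<close>.\<close>

lemma M_set_hull_sum_norm:
  assumes M: "M_set S" and "A \<subseteq> S" "B \<subseteq> S" "A \<inter> B = {}"
    and p: "p \<in> convex hull A" and q: "q \<in> convex hull B"
  shows "norm (p + q) \<le> 2"
proof -
  have dist_neg: "dist (- x) y = norm (x + y)" for x y :: 'a
    by (metis dist_norm minus_add_distrib norm_minus_cancel diff_conv_add_uminus)
  have "convex hull A \<subseteq> cball (- b) 2" if "b \<in> B" for b
  proof (intro hull_minimal convex_cball subsetI)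
    fix a assume "a \<in> A"
    then have "a \<noteq> b" "a \<in> S" "b \<in> S" using assms that by auto
    then show "a \<in> cball (- b) 2" using M_set_midpoint_norm[OF M] by (simp add: dist_neg add.commute)
  qed
  then have "B \<subseteq> cball (- p) 2"
    using p by (force simp: dist_neg add.commute)
  then have "convex hull B \<subseteq> cball (- p) 2"
    by (intro hull_minimal convex_cball)
  then show ?thesis using q by (auto simp: dist_neg)
qed

text \<open>No point of an M-set lies in the convex hull of other points: otherwise
  \<open>norm (a + a) \<le> 2\<close> would contradict \<open>norm a > 1\<close>.\<close>

lemma M_set_point_notin_hull:
  assumes M: "M_set S" and "a \<in> S" "B \<subseteq> S" "a \<notin> B"
  shows "a \<notin> convex hull B"
proof
  assume "a \<in> convex hull B"
  then have "norm (a + a) \<le> 2"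
    using assms by (intro M_set_hull_sum_norm[OF M, of "{a}" B]) auto
  moreover have "norm a > 1" using M \<open>a \<in> S\<close> unfolding M_set_def by blast
  ultimately show False by (simp add: scaleR_2[symmetric])
qed

lemma M_set_Radon_part_card:
  assumes MS: "M_set S" and "A \<subseteq> S" "B \<subseteq> S" "A \<inter> B = {}" "finite A"
    and meet: "convex hull A \<inter> convex hull B \<noteq> {}"
  shows "2 \<le> card A"
proof (rule ccontr)
  assume "\<not> 2 \<le> card A"
  moreover have "A \<noteq> {}" using meet by auto
  then have "card A \<noteq> 0" using \<open>finite A\<close> by simp
  ultimately have "card A = 1" by linarith
  then obtain a where "A = {a}" by (auto simp: card_1_singleton_iff)
  then have "a \<in> convex hull B" "a \<in> S" "a \<notin> B" using assms by auto
  with M_set_point_notin_hull[OF MS] \<open>B \<subseteq> S\<close> show False by blast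
qed

lemma M_set_Radon_partition:
  assumes MS: "M_set S" and "T \<subseteq> S" "finite T" "affine_dependent T"
  obtains A B where "A \<subseteq> T" "B \<subseteq> T" "A \<inter> B = {}"
    and "convex hull A \<inter> convex hull B \<noteq> {}"
    and "2 \<le> card A" "2 \<le> card B" "card A + card B \<le> card T"
proof -
  obtain A B where AB: "A \<subseteq> T" "B \<subseteq> T" "A \<inter> B = {}"
    and meet: "convex hull A \<inter> convex hull B \<noteq> {}"
    by (rule Radon[OF \<open>affine_dependent T\<close>])
  have fin: "finite A" "finite B" using AB \<open>finite T\<close> finite_subset by blast+
  have "A \<subseteq> S" "B \<subseteq> S" using AB \<open>T \<subseteq> S\<close> by auto
  then have "2 \<le> card A" "2 \<le> card B"
    using M_set_Radon_part_card[OF MS] AB(3) meet fin by (metis Int_commute)+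
  moreover have "card A + card B \<le> card T"
    using AB fin \<open>finite T\<close> by (metis card_Un_disjoint card_mono le_sup_iff)
  ultimately show thesis by (rule that[OF AB meet])
qed

lemma M_set_small_subset_affine_independent:
  assumes MS: "M_set S" and "T \<subseteq> S" "finite T" "card T \<le> 3"
  shows "\<not> affine_dependent T"
proof
  assume "affine_dependent T"
  then obtain A B where "A \<subseteq> T" "B \<subseteq> T" "A \<inter> B = {}"
    and "convex hull A \<inter> convex hull B \<noteq> {}"
    and "2 \<le> card A" "2 \<le> card B" "card A + card B \<le> card T"
    by (rule M_set_Radon_partition[OF MS \<open>T \<subseteq> S\<close> \<open>finite T\<close>])
  then show False using \<open>card T \<le> 3\<close> by linarith
qed

lemma independent_card_le_dim_UNIV:
  assumes "0 < dim (UNIV :: 'a::real_vector set)" "independent (B :: 'a set)"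
  shows "finite B \<and> card B \<le> dim (UNIV :: 'a set)"
proof -
  obtain C :: "'a set" where C: "independent C" "UNIV \<subseteq> span C" "card C = dim (UNIV :: 'a set)"
    using real_vector.basis_exists by blast
  then have "finite C" using assms(1) by (metis card_ge_0_finite)
  then show ?thesis
    using real_vector.independent_span_bound[OF \<open>finite C\<close> assms(2)] C by auto
qed

text \<open>More than \<open>dim + 1\<close> points are affinely dependent (the library version of this is
  stated only for Euclidean spaces).\<close>

lemma affine_dependent_if_card_gt_dim:
  assumes "0 < dim (UNIV :: 'a::real_vector set)" "finite S"
    and "dim (UNIV :: 'a set) + 2 \<le> card (S :: 'a set)"
  shows "affine_dependent S"
proof -
  obtain a where "a \<in> S" using assms by fastforce
  define D where "D = {x - a | x. x \<in> S - {a}}"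
  have "D = (\<lambda>x. x - a) ` (S - {a})" unfolding D_def by auto
  then have "card D = card S - 1"
    using \<open>a \<in> S\<close> \<open>finite S\<close> by (simp add: card_image inj_on_def)
  then have "\<not> card D \<le> dim (UNIV :: 'a set)" using assms(3) by linarith
  then have "dependent D" using independent_card_le_dim_UNIV[OF assms(1), of D] by blast
  then have "affine_dependent (insert a (S - {a}))"
    unfolding D_def by (rule dependent_imp_affine_dependent) simp
  then show ?thesis using \<open>a \<in> S\<close> by (simp add: insert_absorb)
qed

lemma in_span_if_card_eq_dim_UNIV:
  assumes "0 < dim (UNIV :: 'a::real_vector set)" "independent (B :: 'a set)"
    and "card B = dim (UNIV :: 'a set)"
  shows "x \<in> span B"
proof (rule ccontr)
  assume x: "x \<notin> span B"
  then have "independent (insert x B)" using assms(2) real_vector.independent_insertI by blast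
  moreover have "finite B" "x \<notin> B" using assms x independent_card_le_dim_UNIV real_vector.span_base by blast+
  ultimately show False
    using independent_card_le_dim_UNIV[OF assms(1), of "insert x B"] assms(3) by simp
qed

lemma span_pair_coordinates:
  fixes u v x :: "'a::real_vector"
  assumes "x \<in> span {u, v}"
  obtains \<sigma> \<tau> where "x = \<sigma> *\<^sub>R u + \<tau> *\<^sub>R v"
proof -
  obtain \<sigma> where "x - \<sigma> *\<^sub>R u \<in> span {v}"
    using assms real_vector.span_breakdown_eq by blast
  then obtain \<tau> where "x - \<sigma> *\<^sub>R u = \<tau> *\<^sub>R v"
    using real_vector.span_singleton by auto
  then have "x = \<sigma> *\<^sub>R u + \<tau> *\<^sub>R v" by (simp add: algebra_simps)
  then show ?thesis by (rule that)
qed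

lemma closed_segment_iff_shift:
  "x \<in> closed_segment p q \<longleftrightarrow> (\<exists>t. 0 \<le> t \<and> t \<le> 1 \<and> x = p + t *\<^sub>R (q - p))"
proof -
  have "p + t *\<^sub>R (q - p) = (1 - t) *\<^sub>R p + t *\<^sub>R q" for t
    by (simp add: algebra_simps)
  then show ?thesis unfolding in_segment by presburger
qed

lemma M_set_not_collinear:
  assumes MS: "M_set S" and pts: "a \<in> S" "b \<in> S" "c \<in> S" "a \<noteq> b" "a \<noteq> c" "b \<noteq> c"
    and collinear: "c - a \<in> span {b - a}"
  shows False
proof -
  have "c - a \<noteq> b - a" using pts by auto
  then have "dependent {c - a, b - a}"
    using collinear unfolding real_vector.dependent_def by (intro bexI[of _ "c - a"]) auto
  moreover have "{x - a | x. x \<in> {b, c}} = {c - a, b - a}" by auto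
  ultimately have "dependent {x - a | x. x \<in> {b, c}}" by simp
  then have "affine_dependent (insert a {b, c})"
    using pts by (intro dependent_imp_affine_dependent) auto
  moreover have "card (insert a {b, c}) \<le> 3" by (simp add: card_insert_if)
  ultimately show False
    using M_set_small_subset_affine_independent[OF MS, of "{a, b, c}"] pts by auto
qed

text \<open>Two non-parallel segments of an M-set in the plane cannot cross at interior points:
  the sums \<open>p + q\<close> with \<open>p \<in> [a,b]\<close>, \<open>q \<in> [c,d]\<close> then cover a neighbourhood of \<open>a + b\<close>,
  in particular the point \<open>(1 + \<delta>) (a + b)\<close> of norm greater than 2.\<close>

lemma M_set_no_transversal_crossing:
  fixes a b c d :: "'a::real_normed_vector"
  assumes d2: "dim (UNIV :: 'a set) = 2" and MS: "M_set S"
    and pts: "a \<in> S" "b \<in> S" "c \<in> S" "d \<in> S" "a \<noteq> b" and disj: "{a, b} \<inter> {c, d} = {}"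
    and transversal: "d - c \<notin> span {b - a}"
    and strict: "0 < \<alpha>" "\<alpha> < 1" "0 < \<beta>" "\<beta> < 1"
    and cross: "a + \<alpha> *\<^sub>R (b - a) = c + \<beta> *\<^sub>R (d - c)"
  shows False
proof -
  define u where "u = b - a"
  define v where "v = d - c"
  have "v \<notin> span {u}" using transversal unfolding u_def v_def .
  moreover have "independent {u}" using pts unfolding u_def by (simp add: real_vector.independent_insert)
  ultimately have "independent {v, u}" by (rule real_vector.independent_insertI)
  moreover have "v \<noteq> u" using transversal real_vector.span_base[of u "{u}"] unfolding u_def v_def by auto
  then have "card {v, u} = 2" by simp
  ultimately have "a + b \<in> span {v, u}" using d2 by (intro in_span_if_card_eq_dim_UNIV) simp_all
  then obtain \<tau> \<sigma> where coords: "a + b = \<tau> *\<^sub>R v + \<sigma> *\<^sub>R u" by (rule span_pair_coordinates)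
  define e where "e = min (min \<alpha> (1 - \<alpha>)) (min \<beta> (1 - \<beta>))"
  define \<delta> where "\<delta> = e / (\<bar>\<sigma>\<bar> + \<bar>\<tau>\<bar> + 1)"
  have "e > 0" using strict unfolding e_def by auto
  then have "\<delta> > 0" unfolding \<delta>_def by (simp add: add_nonneg_pos)
  have small: "\<bar>\<delta> * t\<bar> \<le> e" if "\<bar>t\<bar> \<le> \<bar>\<sigma>\<bar> + \<bar>\<tau>\<bar> + 1" for t
  proof -
    have "\<bar>\<delta> * t\<bar> \<le> \<delta> * (\<bar>\<sigma>\<bar> + \<bar>\<tau>\<bar> + 1)"
      using \<open>\<delta> > 0\<close> that by (simp add: abs_mult mult_left_mono)
    then show ?thesis unfolding \<delta>_def by (simp add: add_nonneg_pos)
  qed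
  define x where "x = 1 - \<alpha> + \<delta> * \<sigma>"
  define y where "y = \<beta> + \<delta> * \<tau>"
  have "\<bar>\<delta> * \<sigma>\<bar> \<le> e" "\<bar>\<delta> * \<tau>\<bar> \<le> e" by (intro small, simp)+
  then have "0 \<le> x" "x \<le> 1" "0 \<le> y" "y \<le> 1"
    unfolding x_def y_def e_def by (auto simp: abs_le_iff)
  then have p: "a + x *\<^sub>R u \<in> convex hull {a, b}" and q: "c + y *\<^sub>R v \<in> convex hull {c, d}"
    unfolding segment_convex_hull[symmetric] closed_segment_iff_shift u_def v_def by blast+
  have "(a + x *\<^sub>R u) + (c + y *\<^sub>R v) = (a + b) + \<delta> *\<^sub>R (\<tau> *\<^sub>R v + \<sigma> *\<^sub>R u)"
    using cross unfolding x_def y_def u_def v_def by (simp add: algebra_simps)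
  also have "\<dots> = (1 + \<delta>) *\<^sub>R (a + b)" using coords by (simp add: algebra_simps)
  finally have "norm ((a + x *\<^sub>R u) + (c + y *\<^sub>R v)) = (1 + \<delta>) * 2"
    using M_set_midpoint_norm[OF MS pts(1,2,5)] \<open>\<delta> > 0\<close> by simp
  moreover have "norm ((a + x *\<^sub>R u) + (c + y *\<^sub>R v)) \<le> 2"
    using M_set_hull_sum_norm[OF MS _ _ disj p q] pts by auto
  ultimately show False using \<open>\<delta> > 0\<close> by simp
qed

text \<open>Crossing at an endpoint would put a point into the hull of others,
  and parallel crossing segments would make three of the points collinear.\<close>

lemma M_set_no_crossing_segments:
  fixes a b c d :: "'a::real_normed_vector"
  assumes d2: "dim (UNIV :: 'a set) = 2" and MS: "M_set S"
    and pts: "a \<in> S" "b \<in> S" "c \<in> S" "d \<in> S" "a \<noteq> b" "c \<noteq> d"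
    and disj: "{a, b} \<inter> {c, d} = {}"
    and z: "z \<in> closed_segment a b" "z \<in> closed_segment c d"
  shows False
proof -
  obtain \<alpha> where \<alpha>: "z = a + \<alpha> *\<^sub>R (b - a)" "0 \<le> \<alpha>" "\<alpha> \<le> 1"
    using z(1) unfolding closed_segment_iff_shift by blast
  obtain \<beta> where \<beta>: "z = c + \<beta> *\<^sub>R (d - c)" "0 \<le> \<beta>" "\<beta> \<le> 1"
    using z(2) unfolding closed_segment_iff_shift by blast
  have "a \<notin> closed_segment c d" "b \<notin> closed_segment c d"
    "c \<notin> closed_segment a b" "d \<notin> closed_segment a b"
    using M_set_point_notin_hull[OF MS] pts disj by (auto simp: segment_convex_hull)
  then have "z \<noteq> a" "z \<noteq> b" "z \<noteq> c" "z \<noteq> d" using z by auto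
  then have strict: "0 < \<alpha>" "\<alpha> < 1" "0 < \<beta>" "\<beta> < 1"
    using \<alpha> \<beta> by (auto simp: less_le)
  have "d - c \<notin> span {b - a}"
  proof
    assume parallel: "d - c \<in> span {b - a}"
    have "c - a = (z - a) - (z - c)" by simp
    also have "\<dots> = \<alpha> *\<^sub>R (b - a) - \<beta> *\<^sub>R (d - c)" by (metis \<alpha>(1) \<beta>(1) add_diff_cancel_left')
    finally have "c - a \<in> span {b - a}"
      using parallel by (simp add: real_vector.span_diff real_vector.span_scale real_vector.span_base)
    then show False using M_set_not_collinear[OF MS pts(1-3)] pts disj by auto
  qed
  then show False
    using M_set_no_transversal_crossing[OF d2 MS pts(1-5) disj _ strict] \<alpha>(1) \<beta>(1) by simp
qed

text \<open>Upper bound: in the plane every M-set has at most three points, since four points would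
  admit a Radon partition into two crossing segments.\<close>

lemma M_set_card_le_3:
  assumes d2: "dim (UNIV :: 'a::real_normed_vector set) = 2" and MS: "M_set (S :: 'a set)"
  shows "finite S \<and> card S \<le> 3"
proof (rule ccontr)
  assume "\<not> (finite S \<and> card S \<le> 3)"
  then have "finite S \<longrightarrow> 4 \<le> card S" by auto
  then obtain T where T: "T \<subseteq> S" "finite T" "card T = 4"
    using obtain_subset_with_card_n infinite_arbitrarily_large by metis
  then have "affine_dependent T"
    using d2 by (intro affine_dependent_if_card_gt_dim) simp_all
  then obtain A B where AB: "A \<subseteq> T" "B \<subseteq> T" "A \<inter> B = {}"
    and meet: "convex hull A \<inter> convex hull B \<noteq> {}"
    and card: "2 \<le> card A" "2 \<le> card B" "card A + card B \<le> card T"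
    by (rule M_set_Radon_partition[OF MS T(1,2)])
  have "card A = 2" "card B = 2" using card T(3) by linarith+
  then obtain a b c d where "A = {a, b}" "a \<noteq> b" "B = {c, d}" "c \<noteq> d"
    by (meson card_2_iff)
  with AB meet T(1) show False
    using M_set_no_crossing_segments[OF d2 MS, of a b c d]
    by (auto simp: segment_convex_hull)
qed

text \<open>Lower bound construction: three unit vectors summing to zero, scaled by 2, form an
  M-set of three points (the midpoints are the negated unit vectors).\<close>

lemma M_set_of_unit_triangle:
  fixes a b c :: "'a::real_normed_vector"
  assumes unit: "norm a = 1" "norm b = 1" "norm c = 1" and sum: "a + b + c = 0"
  shows "M_set {2 *\<^sub>R a, 2 *\<^sub>R b, 2 *\<^sub>R c} \<and> card {2 *\<^sub>R a, 2 *\<^sub>R b, 2 *\<^sub>R c} = 3"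
proof
  have mid: "(1/2) *\<^sub>R (2 *\<^sub>R x + 2 *\<^sub>R y) = x + y" for x y :: 'a
    by (simp add: algebra_simps)
  have "a + b = - c" "a + c = - b" "b + c = - a"
    using sum by (simp_all add: algebra_simps eq_neg_iff_add_eq_0)
  then show "M_set {2 *\<^sub>R a, 2 *\<^sub>R b, 2 *\<^sub>R c}"
    unfolding M_set_def midpoint_set_def using unit by (auto simp: mid add.commute)
  text \<open>Two equal vertices would force the third one to have norm 2.\<close>
  have "a \<noteq> b"
  proof
    assume "a = b"
    then have "c = - (2 *\<^sub>R a)" using sum by (simp add: scaleR_2 algebra_simps eq_neg_iff_add_eq_0)
    then show False using unit by simp
  qed
  moreover have "a \<noteq> c"
  proof
    assume "a = c"
    then have "b = - (2 *\<^sub>R a)" using sum by (simp add: scaleR_2 algebra_simps eq_neg_iff_add_eq_0)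
    then show False using unit by simp
  qed
  moreover have "b \<noteq> c"
  proof
    assume "b = c"
    then have "a = - (2 *\<^sub>R b)" using sum by (simp add: scaleR_2 algebra_simps eq_neg_iff_add_eq_0)
    then show False using unit by simp
  qed
  ultimately show "card {2 *\<^sub>R a, 2 *\<^sub>R b, 2 *\<^sub>R c} = 3" by simp
qed

text \<open>Such a triangle exists through any unit vector \<open>a\<close> as soon as there is a direction
  \<open>v\<close> not parallel to \<open>a\<close>: moving a unit vector \<open>b\<close> continuously from \<open>a\<close> to \<open>-a\<close>, the norm
  of \<open>a + b\<close> passes from 2 to 0, hence through 1.\<close>

lemma exists_unit_triangle:
  fixes a v :: "'a::real_normed_vector"
  assumes a: "norm a = 1" and v: "v \<notin> span {a}"
  obtains b c where "norm b = 1" "norm c = 1" "a + b + c = 0"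
proof -
  text \<open>A path from \<open>a\<close> to \<open>-a\<close> through the half-plane containing \<open>v\<close>, avoiding the origin.\<close>
  define p where "p t = (1 - 2 * t) *\<^sub>R a + (t * (1 - t)) *\<^sub>R v" for t :: real
  have p_nonzero: "p t \<noteq> 0" for t
  proof
    assume p0: "p t = 0"
    show False
    proof (cases "t * (1 - t) = 0")
      case True
      then have "t = 0 \<or> t = 1" by auto
      then show False using p0 a unfolding p_def by auto
    next
      case False
      have "(t * (1 - t)) *\<^sub>R v = - ((1 - 2 * t) *\<^sub>R a)"
        using p0 unfolding p_def by (simp add: eq_neg_iff_add_eq_0 add.commute)
      then have "(t * (1 - t)) *\<^sub>R v \<in> span {a}"
        by (simp add: real_vector.span_neg real_vector.span_scale real_vector.span_base)
      then have "(1 / (t * (1 - t))) *\<^sub>R ((t * (1 - t)) *\<^sub>R v) \<in> span {a}"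
        by (rule real_vector.span_scale)
      then show False using False v by simp
    qed
  qed
  define g where "g t = norm (a + (1 / norm (p t)) *\<^sub>R p t)" for t
  have "continuous_on {0..1} g"
    unfolding g_def p_def using p_nonzero[unfolded p_def] by (intro continuous_intros) auto
  moreover have "g 0 = 2" unfolding g_def p_def using a by (simp add: scaleR_2[symmetric])
  moreover have "g 1 = 0" unfolding g_def p_def using a by simp
  ultimately obtain t where "g t = 1" using IVT2'[of g 1 1 0] by auto
  define b where "b = (1 / norm (p t)) *\<^sub>R p t"
  have "norm b = 1" using p_nonzero[of t] unfolding b_def by simp
  moreover have "norm (- (a + b)) = 1" using \<open>g t = 1\<close> unfolding norm_minus_cancel g_def b_def .
  moreover have "a + b + - (a + b) = 0" by simp
  ultimately show thesis by (rule that)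
qed

lemma exists_nonparallel_unit_pair:
  assumes "2 \<le> dim (UNIV :: 'a set)"
  obtains a v :: "'a::real_normed_vector" where "norm a = 1" "v \<notin> span {a}"
proof -
  obtain B :: "'a set" where B: "independent B" "card B = dim (UNIV :: 'a set)"
    using real_vector.basis_exists by blast
  then obtain C where "C \<subseteq> B" "card C = 2"
    using assms obtain_subset_with_card_n by metis
  then obtain b v where bv: "C = {v, b}" "v \<noteq> b" by (auto simp: card_2_iff)
  then have "independent (insert v {b})" using real_vector.independent_mono[OF B(1) \<open>C \<subseteq> B\<close>] by simp
  then have "b \<noteq> 0" "v \<notin> span {b}"
    using bv real_vector.dependent_zero by (auto simp: real_vector.independent_insert)
  define a where "a = (1 / norm b) *\<^sub>R b"
  have "norm a = 1" using \<open>b \<noteq> 0\<close> unfolding a_def by simp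
  moreover have "span {a} \<subseteq> span {b}"
    unfolding a_def by (intro real_vector.span_minimal) (auto intro: real_vector.span_scale real_vector.span_base)
  ultimately show thesis using that \<open>v \<notin> span {b}\<close> by blast
qed

lemma exists_M_set_card_3:
  assumes "2 \<le> dim (UNIV :: 'a::real_normed_vector set)"
  shows "\<exists>S :: 'a set. M_set S \<and> finite S \<and> card S = 3"
proof -
  obtain a v :: 'a where "norm a = 1" "v \<notin> span {a}"
    using exists_nonparallel_unit_pair[OF assms] .
  then obtain b c where "norm b = 1" "norm c = 1" "a + b + c = 0"
    by (rule exists_unit_triangle)
  then show ?thesis using M_set_of_unit_triangle \<open>norm a = 1\<close> by blast
qed

lemma m_num_eqI:
  assumes "M_set (S0 :: 'a::real_normed_vector set)" "finite S0" "card S0 = n"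
    and "\<And>S :: 'a set. M_set S \<Longrightarrow> finite S \<and> card S \<le> n"
  shows "m_num TYPE('a) = enat n"
proof -
  let ?P = "\<lambda>n. \<exists>S :: 'a set. M_set S \<and> finite S \<and> card S = n"
  have "(GREATEST k. ?P k) = n"
    by (rule Greatest_equality) (use assms in auto)
  then show ?thesis unfolding m_num_def using assms by auto
qed

theorem theorem1:
  assumes "dim (UNIV :: 'a::real_normed_vector set) = 2"
  shows "m_num TYPE('a) = 3"
proof -
  have "\<exists>S :: 'a set. M_set S \<and> finite S \<and> card S = 3"
    by (rule exists_M_set_card_3) (simp add: assms)
  then obtain S :: "'a set" where "M_set S" "finite S" "card S = 3" by blast
  then have "m_num TYPE('a) = enat 3"
    using m_num_eqI M_set_card_le_3[OF assms] by blast
  then show ?thesis by (simp add: numeral_eq_enat)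
qed

end
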